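(* Let $n \ge 2$ and let $K_n$ be the complete graph on $n$ vertices (the interaction graph of a dense one-body Fermionic Hamiltonian on $n$ sites). Then: (i) $d_{\mathrm{swap}}(K_n) = n-2$, and there exists a swap network for $K_n$ with swap depth $n-2$ and $n$ interaction layers; (ii) if $n$ is odd, every swap network for $K_n$ has at least $n$ interaction layers (so $n$ interaction layers is optimal); (iii) if $n$ is even and $n > 2$, the minimum number of interaction layers over all swap networks for $K_n$ is $n-1$, and no swap network for $K_n$ has simultaneously swap depth $n-2$ and $n-1$ interaction layers.
   Context: Linear-connectivity swap network model. Let $G=(V,E)$ be a finite graph with $|V|=n$. Qubits occupy positions $0,1,\ldots,n-1$ on a line. A configuration is a bijection $\pi: V \to \{0,\ldots,n-1\}$. A swap layer is a set of pairwise disjoint pairs of adjacent positions $\{i,i+1\}$; applying it to a configuration exchanges the vertices located at the two positions of each pair. A swap network for $G$ consists of an initial configuration $\pi_0$ (chosen freely) and a sequence of swap layers $L_1,\ldots,L_d$, producing configurations $\pi_0,\pi_1,\ldots,\pi_d$, together with a sequence of interaction layers, each attached to some configuration $\pi_t$ (several interaction layers may be attached to the same configuration); an interaction layer at $\pi_t$ is a set of pairwise disjoint edges $\{v,w\}\in E$ with $|\pi_t(v)-\pi_t(w)|=1$ (so each vertex takes part in at most one interaction per layer). It is required that every edge of $G$ belongs to some interaction layer. The swap depth of the network is $d$ and its interaction depth is the number of interaction layers. $d_{\mathrm{swap}}(G)$ denotes the minimum swap depth over all swap networks for $G$. *)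

theory Defs
  imports Main
begin

text \<open>Graph G = (V,E): V a finite vertex set, E a set of edges, each edge a 2-element
subset of V. Positions on the line are 0,...,n-1 with n = card V.\<close>

definition configuration :: "'a set \<Rightarrow> ('a \<Rightarrow> nat) \<Rightarrow> bool" where
  "configuration V \<pi> \<longleftrightarrow> bij_betw \<pi> V {0..<card V}"

definition swap_layer :: "nat \<Rightarrow> nat set set \<Rightarrow> bool" where
  "swap_layer n L \<longleftrightarrow>
     (\<forall>P\<in>L. \<exists>i. P = {i, Suc i} \<and> Suc i < n) \<and>
     (\<forall>P\<in>L. \<forall>Q\<in>L. P \<noteq> Q \<longrightarrow> P \<inter> Q = {})"

definition swap_pos :: "nat set set \<Rightarrow> nat \<Rightarrow> nat" where
  "swap_pos L p = (if {p, Suc p} \<in> L then Suc p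
                   else if 0 < p \<and> {p - 1, p} \<in> L then p - 1 else p)"

definition apply_layer :: "nat set set \<Rightarrow> ('a \<Rightarrow> nat) \<Rightarrow> ('a \<Rightarrow> nat)" where
  "apply_layer L \<pi> = swap_pos L \<circ> \<pi>"

definition config_at :: "('a \<Rightarrow> nat) \<Rightarrow> nat set set list \<Rightarrow> nat \<Rightarrow> ('a \<Rightarrow> nat)" where
  "config_at \<pi>0 Ls t = foldl (\<lambda>\<pi> L. apply_layer L \<pi>) \<pi>0 (take t Ls)"

definition interaction_layer :: "'a set set \<Rightarrow> ('a \<Rightarrow> nat) \<Rightarrow> 'a set set \<Rightarrow> bool" where
  "interaction_layer E \<pi> I \<longleftrightarrow>
     I \<subseteq> E \<and>
     (\<forall>e\<in>I. \<forall>e'\<in>I. e \<noteq> e' \<longrightarrow> e \<inter> e' = {}) \<and>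
     (\<forall>e\<in>I. \<exists>v w. e = {v, w} \<and> (\<pi> v = Suc (\<pi> w) \<or> \<pi> w = Suc (\<pi> v)))"

text \<open>Swap depth = length Ls, interaction depth = length Is.\<close>
definition swap_network ::
  "'a set \<Rightarrow> 'a set set \<Rightarrow> ('a \<Rightarrow> nat) \<Rightarrow> nat set set list \<Rightarrow> (nat \<times> 'a set set) list \<Rightarrow> bool" where
  "swap_network V E \<pi>0 Ls Is \<longleftrightarrow>
     configuration V \<pi>0 \<and>
     (\<forall>L\<in>set Ls. swap_layer (card V) L) \<and>
     (\<forall>(t, I)\<in>set Is. t \<le> length Ls \<and> interaction_layer E (config_at \<pi>0 Ls t) I) \<and>
     (\<forall>e\<in>E. \<exists>(t, I)\<in>set Is. e \<in> I)"

definition d_swap :: "'a set \<Rightarrow> 'a set set \<Rightarrow> nat" where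
  "d_swap V E = (LEAST d. \<exists>\<pi>0 Ls Is. swap_network V E \<pi>0 Ls Is \<and> length Ls = d)"

definition d_int :: "'a set \<Rightarrow> 'a set set \<Rightarrow> nat" where
  "d_int V E = (LEAST k. \<exists>\<pi>0 Ls Is. swap_network V E \<pi>0 Ls Is \<and> length Is = k)"

definition Kn_V :: "nat \<Rightarrow> nat set" where
  "Kn_V n = {0..<n}"

definition Kn_E :: "nat \<Rightarrow> nat set set" where
  "Kn_E n = {{v, w} | v w. v < n \<and> w < n \<and> v \<noteq> w}"

end

theory Submission
  imports Defs
begin

(* Let a start at position 0. A vertex can only get to the left of a by passing it
   as its right neighbour, so every vertex left of a has already been adjacent to a, and each swap
   layer makes at most one new vertex adjacent to a: n - 1 <= d + 1. An interaction layer is a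
   matching, so it contains at most one edge at each vertex. Hence at least n - 1 interaction
   layers are needed, and with exactly n - 1 every layer is a perfect matching (impossible for odd
   n) and no edge occurs twice. For even n and d = n - 2, each of these perfect matchings contains
   the pair at positions 0, 1 of its configuration, so they sit at the n - 1 distinct times
   0, ..., n - 2; but among the first three configurations the pair at positions 0, 1 repeats.

   In odd-even transposition sort on N positions every trajectory is a straight
   line reflected at the two ends. Any two elements become adjacent within N - 2 rounds, just
   before they are swapped, except the pairs (p, p + 1) with p odd, which are adjacent at the start.
   For even n, vertex 0 is pinned to position 0 and the others run 2 (n - 2) rounds of odd-even
   transposition; at every even time the pairs at positions (2 i, 2 i + 1) form a perfect matching,
   and these n - 1 matchings cover all edges. *)

section \<open>Swap layers and configurations\<close>

lemma insert_Suc_eq_iff [simp]: "{p, Suc p} = {q, Suc q} \<longleftrightarrow> p = q"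
  by (auto simp: doubleton_eq_iff)

lemma swap_layer_pair_less:
  assumes "swap_layer n L" "{p, Suc p} \<in> L"
  shows "Suc p < n"
proof -
  have "\<forall>P\<in>L. \<exists>i. P = {i, Suc i} \<and> Suc i < n"
    using assms(1) unfolding swap_layer_def by (rule conjunct1)
  then show ?thesis using assms(2) by fastforce
qed

lemma swap_layer_next_pair_notin:
  assumes "swap_layer n L" "{p, Suc p} \<in> L"
  shows "{Suc p, Suc (Suc p)} \<notin> L"
proof
  assume "{Suc p, Suc (Suc p)} \<in> L"
  moreover have "{p, Suc p} \<noteq> {Suc p, Suc (Suc p)}" by simp
  moreover have "\<forall>P\<in>L. \<forall>Q\<in>L. P \<noteq> Q \<longrightarrow> P \<inter> Q = {}"
    using assms(1) unfolding swap_layer_def by blast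
  ultimately have "{p, Suc p} \<inter> {Suc p, Suc (Suc p)} = {}"
    using assms(2) by meson
  then show False by auto
qed

lemma swap_pos_cases:
  obtains "{p, Suc p} \<in> L" "swap_pos L p = Suc p"
    | "{p, Suc p} \<notin> L" "0 < p" "{p - 1, p} \<in> L" "swap_pos L p = p - 1"
    | "{p, Suc p} \<notin> L" "0 < p \<longrightarrow> {p - 1, p} \<notin> L" "swap_pos L p = p"
  unfolding swap_pos_def by (cases "{p, Suc p} \<in> L"; cases "0 < p \<and> {p - 1, p} \<in> L") auto

lemma swap_pos_swap_pos:
  assumes L: "swap_layer n L"
  shows "swap_pos L (swap_pos L p) = p"
proof (cases rule: swap_pos_cases[where p = p and L = L])
  case 1
  then show ?thesis
    using swap_layer_next_pair_notin[OF L] unfolding swap_pos_def by auto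
next
  case 2
  then have "{swap_pos L p, Suc (swap_pos L p)} \<in> L" by simp
  then show ?thesis using 2 unfolding swap_pos_def by simp
qed simp

lemma swap_pos_eq_iff:
  assumes "swap_layer n L"
  shows "swap_pos L p = q \<longleftrightarrow> p = swap_pos L q"
  using swap_pos_swap_pos[OF assms] by metis

lemma swap_pos_less:
  assumes L: "swap_layer n L" and "p < n"
  shows "swap_pos L p < n"
  by (cases rule: swap_pos_cases[where p = p and L = L])
    (use assms swap_layer_pair_less[OF L] in auto)

lemma bij_betw_swap_pos:
  assumes L: "swap_layer n L"
  shows "bij_betw (swap_pos L) {0..<n} {0..<n}"
proof (rule bij_betw_byWitness[where f' = "swap_pos L"])
  show "swap_pos L ` {0..<n} \<subseteq> {0..<n}" using swap_pos_less[OF L] by auto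
qed (auto simp: swap_pos_swap_pos[OF L] swap_pos_less[OF L])

lemma swap_pos_crossing:
  assumes "p < q" "swap_pos L q < swap_pos L p"
  shows "q = Suc p"
  by (cases rule: swap_pos_cases[where p = p and L = L];
      cases rule: swap_pos_cases[where p = q and L = L]) (use assms in auto)

lemma swap_pos_less_2_iff:
  assumes "swap_layer n L"
  shows "swap_pos L p < 2 \<longleftrightarrow> p = swap_pos L 0 \<or> p = swap_pos L 1"
  using swap_pos_eq_iff[OF assms, of p 0] swap_pos_eq_iff[OF assms, of p 1] by linarith

lemma swap_pos_front_cases:
  assumes L: "swap_layer n L"
  obtains "swap_pos L 0 = 1" "swap_pos L 1 = 0"
    | "swap_pos L 0 = 0" "swap_pos L 1 = 1"
    | "swap_pos L 0 = 0" "swap_pos L 1 = 2" "swap_pos L 2 = 1"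
proof (cases "{0, 1} \<in> L")
  case True
  then have "{1, 2} \<notin> L" using swap_layer_next_pair_notin[OF L, of 0] by (simp add: numeral_2_eq_2)
  then show ?thesis using that(1) True unfolding swap_pos_def by (simp add: numeral_2_eq_2)
next
  case False
  then have "swap_pos L 0 = 0" unfolding swap_pos_def by simp
  moreover have "swap_pos L 1 = 1 \<or> swap_pos L 1 = 2"
    using False unfolding swap_pos_def by (simp add: numeral_2_eq_2)
  ultimately show ?thesis
    using that(2,3) swap_pos_swap_pos[OF L, of 1] by force
qed

(* {swap_pos L 0, swap_pos L 1} is the set of positions that L moves onto positions 0 and 1. *)
lemma front_positions_repeat:
  assumes L0: "swap_layer n L0" and L1: "swap_layer n L1"
  shows "{swap_pos L0 0, swap_pos L0 1} = {0, 1}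
       \<or> {swap_pos L0 (swap_pos L1 0), swap_pos L0 (swap_pos L1 1)} = {swap_pos L0 0, swap_pos L0 1}
       \<or> {swap_pos L0 (swap_pos L1 0), swap_pos L0 (swap_pos L1 1)} = {0, 1}"
  by (cases rule: swap_pos_front_cases[OF L0]; cases rule: swap_pos_front_cases[OF L1]) auto

lemma config_at_0 [simp]: "config_at \<pi>0 Ls 0 = \<pi>0"
  unfolding config_at_def by simp

lemma config_at_Suc:
  "t < length Ls \<Longrightarrow> config_at \<pi>0 Ls (Suc t) = swap_pos (Ls ! t) \<circ> config_at \<pi>0 Ls t"
  unfolding config_at_def by (simp add: take_Suc_conv_app_nth apply_layer_def)

lemma bij_betw_config_at:
  assumes "configuration V \<pi>0" "\<forall>L\<in>set Ls. swap_layer (card V) L" "t \<le> length Ls"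
  shows "bij_betw (config_at \<pi>0 Ls t) V {0..<card V}"
  using assms(3)
proof (induction t)
  case 0
  then show ?case using assms(1) by (simp add: configuration_def)
next
  case (Suc t)
  then have t: "t < length Ls" by simp
  then have L: "swap_layer (card V) (Ls ! t)" using assms(2) by simp
  show ?case
    unfolding config_at_Suc[OF t]
    using bij_betw_trans[OF Suc.IH bij_betw_swap_pos[OF L]] t by (simp add: comp_def)
qed

lemma configuration_finite: "configuration V \<pi> \<Longrightarrow> finite V"
  unfolding configuration_def using bij_betw_finite by blast

lemma front_pair_repeats:
  fixes V :: "'a set" and \<pi>0 :: "'a \<Rightarrow> nat"
  assumes layers: "\<forall>L\<in>set Ls. swap_layer n L" and len: "2 \<le> length Ls"
  defines "front t \<equiv> {v \<in> V. config_at \<pi>0 Ls t v < 2}"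
  shows "front 0 = front 1 \<or> front 1 = front 2 \<or> front 0 = front 2"
proof -
  define \<sigma>0 where "\<sigma>0 = swap_pos (Ls ! 0)"
  define \<sigma>1 where "\<sigma>1 = swap_pos (Ls ! 1)"
  have t: "0 < length Ls" "1 < length Ls" using len by linarith+
  then have "Ls ! 0 \<in> set Ls" "Ls ! 1 \<in> set Ls" by simp_all
  then have L0: "swap_layer n (Ls ! 0)" and L1: "swap_layer n (Ls ! 1)" using layers by blast+
  have config1: "config_at \<pi>0 Ls 1 v = \<sigma>0 (\<pi>0 v)" for v
    using config_at_Suc[OF t(1), of \<pi>0] unfolding \<sigma>0_def by simp
  have config2: "config_at \<pi>0 Ls 2 v = \<sigma>1 (\<sigma>0 (\<pi>0 v))" for v
    using config_at_Suc[OF t(2), of \<pi>0] config1 unfolding \<sigma>1_def by (simp add: numeral_2_eq_2)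
  have front0: "front 0 = {v \<in> V. \<pi>0 v \<in> {0, 1}}"
    unfolding front_def by auto
  have front1: "front 1 = {v \<in> V. \<pi>0 v \<in> {\<sigma>0 0, \<sigma>0 1}}"
    unfolding front_def config1 \<sigma>0_def swap_pos_less_2_iff[OF L0] by simp
  have front2: "front 2 = {v \<in> V. \<pi>0 v \<in> {\<sigma>0 (\<sigma>1 0), \<sigma>0 (\<sigma>1 1)}}"
  proof -
    have "\<sigma>1 (\<sigma>0 p) < 2 \<longleftrightarrow> p \<in> {\<sigma>0 (\<sigma>1 0), \<sigma>0 (\<sigma>1 1)}" for p
      using swap_pos_less_2_iff[OF L1, of "\<sigma>0 p"] swap_pos_eq_iff[OF L0, of p "\<sigma>1 0"]
        swap_pos_eq_iff[OF L0, of p "\<sigma>1 1"]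
      unfolding \<sigma>0_def \<sigma>1_def by simp
    then show ?thesis unfolding front_def config2 by simp
  qed
  from front_positions_repeat[OF L0 L1, folded \<sigma>0_def \<sigma>1_def]
  show ?thesis unfolding front0 front1 front2 by (elim disjE) simp_all
qed

lemma card_fiber_le_1:
  assumes "inj_on f V"
  shows "card {w \<in> V. f w = c} \<le> 1"
proof (cases "finite {w \<in> V. f w = c}")
  case True
  then show ?thesis using assms by (auto simp: card_le_Suc0_iff_eq inj_on_def)
qed simp

definition adjacent_at :: "('a \<Rightarrow> nat) \<Rightarrow> 'a \<Rightarrow> 'a \<Rightarrow> bool" where
  "adjacent_at \<pi> v w \<longleftrightarrow> \<pi> w = Suc (\<pi> v) \<or> \<pi> v = Suc (\<pi> w)"

lemma inj_on_config_at:
  assumes "configuration V \<pi>0" "\<forall>L\<in>set Ls. swap_layer (card V) L" "t \<le> length Ls"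
  shows "inj_on (config_at \<pi>0 Ls t) V"
  using bij_betw_config_at[OF assms] unfolding bij_betw_def by simp

lemma config_at_Suc_overtakes:
  assumes conf: "configuration V \<pi>0" and layers: "\<forall>L\<in>set Ls. swap_layer (card V) L"
    and "a \<in> V" "w \<in> V" and t: "t < length Ls"
    and "config_at \<pi>0 Ls (Suc t) w < config_at \<pi>0 Ls (Suc t) a"
  shows "config_at \<pi>0 Ls t w < config_at \<pi>0 Ls t a
    \<or> config_at \<pi>0 Ls t w = Suc (config_at \<pi>0 Ls t a)"
proof -
  have "w \<noteq> a" using assms(6) by auto
  then have "config_at \<pi>0 Ls t w \<noteq> config_at \<pi>0 Ls t a"
    using inj_onD[OF inj_on_config_at[OF conf layers] _ assms(4,3)] t by fastforce
  moreover have "swap_pos (Ls ! t) (config_at \<pi>0 Ls t w) < swap_pos (Ls ! t) (config_at \<pi>0 Ls t a)"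
    using assms(6) t by (simp add: config_at_Suc)
  ultimately show ?thesis
    using swap_pos_crossing[of "config_at \<pi>0 Ls t a" "config_at \<pi>0 Ls t w" "Ls ! t"]
    by (cases "config_at \<pi>0 Ls t w < config_at \<pi>0 Ls t a") auto
qed

definition met :: "'a set \<Rightarrow> ('a \<Rightarrow> nat) \<Rightarrow> nat set set list \<Rightarrow> 'a \<Rightarrow> nat \<Rightarrow> 'a set" where
  "met V \<pi>0 Ls a t = {w \<in> V. \<exists>s \<le> t. adjacent_at (config_at \<pi>0 Ls s) a w}"

lemma met_mono: "met V \<pi>0 Ls a t \<subseteq> met V \<pi>0 Ls a (Suc t)"
  unfolding met_def using le_SucI by blast

lemma right_neighbour_met:
  "{w \<in> V. config_at \<pi>0 Ls t w = Suc (config_at \<pi>0 Ls t a)} \<subseteq> met V \<pi>0 Ls a t"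
  unfolding met_def adjacent_at_def by auto

lemma left_subset_met:
  assumes conf: "configuration V \<pi>0" and layers: "\<forall>L\<in>set Ls. swap_layer (card V) L"
    and a: "a \<in> V" "\<pi>0 a = 0" and "t < length Ls"
  shows "{w \<in> V. config_at \<pi>0 Ls (Suc t) w < config_at \<pi>0 Ls (Suc t) a} \<subseteq> met V \<pi>0 Ls a t"
  using \<open>t < length Ls\<close>
proof (induction t)
  case 0
  then show ?case
    using config_at_Suc_overtakes[OF conf layers a(1) _ 0] a(2) right_neighbour_met[of V \<pi>0 Ls 0 a]
    by fastforce
next
  case (Suc t)
  then show ?case
    using config_at_Suc_overtakes[OF conf layers a(1) _ Suc.prems] met_mono[of V \<pi>0 Ls a t]
      right_neighbour_met[of V \<pi>0 Ls "Suc t" a]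
    by fastforce
qed

lemma card_met_le_Suc:
  assumes conf: "configuration V \<pi>0" and layers: "\<forall>L\<in>set Ls. swap_layer (card V) L"
    and a: "a \<in> V" "\<pi>0 a = 0" and "t \<le> length Ls"
  shows "card (met V \<pi>0 Ls a t) \<le> Suc t"
proof -
  let ?right = "\<lambda>t. {w \<in> V. config_at \<pi>0 Ls t w = Suc (config_at \<pi>0 Ls t a)}"
  have finite: "finite (?right t)" for t
    using configuration_finite[OF conf] by simp
  have card_right: "card (?right t) \<le> 1" if "t \<le> length Ls" for t
    by (rule card_fiber_le_1[OF inj_on_config_at[OF conf layers that]])
  show ?thesis
    using \<open>t \<le> length Ls\<close>
  proof (induction t)
    case 0
    have "met V \<pi>0 Ls a 0 \<subseteq> ?right 0" using a(2) unfolding met_def adjacent_at_def by auto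
    then have "card (met V \<pi>0 Ls a 0) \<le> card (?right 0)" by (rule card_mono[OF finite])
    then show ?case using card_right[of 0] by simp
  next
    case (Suc t)
    have "met V \<pi>0 Ls a (Suc t) \<subseteq> met V \<pi>0 Ls a t \<union> ?right (Suc t)"
      using left_subset_met[OF conf layers a, of t] Suc.prems
      unfolding met_def adjacent_at_def by (auto simp: le_Suc_eq)
    then have "card (met V \<pi>0 Ls a (Suc t)) \<le> card (met V \<pi>0 Ls a t \<union> ?right (Suc t))"
      using configuration_finite[OF conf] finite by (intro card_mono) (auto simp: met_def)
    also have "\<dots> \<le> card (met V \<pi>0 Ls a t) + card (?right (Suc t))" by (rule card_Un_le)
    finally show ?case using Suc card_right[of "Suc t"] by simp
  qed
qed

section \<open>Swap networks of arbitrary graphs\<close>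

lemma swap_networkD:
  assumes "swap_network V E \<pi>0 Ls Is"
  shows "configuration V \<pi>0" "\<forall>L\<in>set Ls. swap_layer (card V) L"
    and "(t, I) \<in> set Is \<Longrightarrow> t \<le> length Ls"
    and "(t, I) \<in> set Is \<Longrightarrow> interaction_layer E (config_at \<pi>0 Ls t) I"
    and "e \<in> E \<Longrightarrow> \<exists>t I. (t, I) \<in> set Is \<and> e \<in> I"
  using assms unfolding swap_network_def by fast+

lemma swap_network_bij_betw_config_at:
  assumes "swap_network V E \<pi>0 Ls Is" "t \<le> length Ls"
  shows "bij_betw (config_at \<pi>0 Ls t) V {0..<card V}"
  using bij_betw_config_at swap_networkD(1,2) assms by blast

lemma swap_network_position_occupied:
  assumes "swap_network V E \<pi>0 Ls Is" "t \<le> length Ls" "p < card V"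
  obtains v where "v \<in> V" "config_at \<pi>0 Ls t v = p"
proof -
  have "p \<in> config_at \<pi>0 Ls t ` V"
    using bij_betw_imp_surj_on[OF swap_network_bij_betw_config_at[OF assms(1,2)]] assms(3) by simp
  then show ?thesis using that by blast
qed

lemma swap_network_nth:
  assumes "swap_network V E \<pi>0 Ls Is" "j < length Is"
  shows "fst (Is ! j) \<le> length Ls"
    and "interaction_layer E (config_at \<pi>0 Ls (fst (Is ! j))) (snd (Is ! j))"
proof -
  have "(fst (Is ! j), snd (Is ! j)) \<in> set Is" using assms(2) by simp
  then show "fst (Is ! j) \<le> length Ls"
    and "interaction_layer E (config_at \<pi>0 Ls (fst (Is ! j))) (snd (Is ! j))"
    using swap_networkD(3,4)[OF assms(1)] by blast+
qed

lemma interaction_layer_subset: "interaction_layer E \<pi> I \<Longrightarrow> I \<subseteq> E"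
  unfolding interaction_layer_def by blast

lemma interaction_layer_disjoint:
  assumes "interaction_layer E \<pi> I" "e \<in> I" "e' \<in> I" "e \<noteq> e'"
  shows "e \<inter> e' = {}"
  using assms unfolding interaction_layer_def by blast

lemma interaction_layer_adjacent:
  assumes "interaction_layer E \<pi> I" "{v, w} \<in> I"
  shows "adjacent_at \<pi> v w"
proof -
  have "\<exists>v' w'. {v, w} = {v', w'} \<and> (\<pi> v' = Suc (\<pi> w') \<or> \<pi> w' = Suc (\<pi> v'))"
    using assms unfolding interaction_layer_def by blast
  then show ?thesis unfolding adjacent_at_def by (auto simp: doubleton_eq_iff)
qed

lemma interaction_layer_partner_unique:
  assumes "interaction_layer E \<pi> I" "{u, w} \<in> I" "{u, w'} \<in> I"
  shows "w = w'"
proof (rule ccontr)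
  assume "w \<noteq> w'"
  then have "{u, w} \<noteq> {u, w'}" by (auto simp: doubleton_eq_iff)
  then have "{u, w} \<inter> {u, w'} = {}" by (rule interaction_layer_disjoint[OF assms])
  then show False by blast
qed

lemma degree_le_Suc_swap_depth:
  assumes net: "swap_network V E \<pi>0 Ls Is" and a: "a \<in> V" "\<pi>0 a = 0"
  shows "card {w \<in> V. {a, w} \<in> E} \<le> Suc (length Ls)"
proof -
  have "{w \<in> V. {a, w} \<in> E} \<subseteq> met V \<pi>0 Ls a (length Ls)"
  proof safe
    fix w assume "w \<in> V" "{a, w} \<in> E"
    then obtain t I where tI: "(t, I) \<in> set Is" "{a, w} \<in> I"
      using swap_networkD(5)[OF net] by blast
    then have "adjacent_at (config_at \<pi>0 Ls t) a w" "t \<le> length Ls"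
      using interaction_layer_adjacent[OF swap_networkD(4)[OF net tI(1)] tI(2)]
        swap_networkD(3)[OF net tI(1)] by simp_all
    then show "w \<in> met V \<pi>0 Ls a (length Ls)" using \<open>w \<in> V\<close> unfolding met_def by blast
  qed
  then have "card {w \<in> V. {a, w} \<in> E} \<le> card (met V \<pi>0 Ls a (length Ls))"
    using configuration_finite[OF swap_networkD(1)[OF net]]
    by (intro card_mono) (auto simp: met_def)
  also have "\<dots> \<le> Suc (length Ls)"
    using card_met_le_Suc[OF swap_networkD(1,2)[OF net] a] by simp
  finally show ?thesis .
qed

definition incidences :: "(nat \<times> 'a set set) list \<Rightarrow> 'a \<Rightarrow> (nat \<times> 'a) set" where
  "incidences Is u = {(j, w). j < length Is \<and> {u, w} \<in> snd (Is ! j)}"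

lemma inj_on_fst_incidences:
  assumes net: "swap_network V E \<pi>0 Ls Is"
  shows "inj_on fst (incidences Is u)"
proof (rule inj_onI)
  fix x y assume "x \<in> incidences Is u" "y \<in> incidences Is u" "fst x = fst y"
  then obtain j w w' where xy: "x = (j, w)" "y = (j, w')" and j: "j < length Is"
    and edges: "{u, w} \<in> snd (Is ! j)" "{u, w'} \<in> snd (Is ! j)"
    unfolding incidences_def by auto
  show "x = y"
    using interaction_layer_partner_unique[OF swap_network_nth(2)[OF net j] edges] xy by simp
qed

lemma fst_incidences_subset: "fst ` incidences Is u \<subseteq> {..<length Is}"
  unfolding incidences_def by auto

lemma finite_incidences:
  assumes "swap_network V E \<pi>0 Ls Is"
  shows "finite (incidences Is u)"
  using finite_imageD[OF finite_subset[OF fst_incidences_subset] inj_on_fst_incidences[OF assms]]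
  by simp

lemma neighbours_subset_snd_incidences:
  assumes net: "swap_network V E \<pi>0 Ls Is"
  shows "{w \<in> V. {u, w} \<in> E} \<subseteq> snd ` incidences Is u"
proof safe
  fix w assume "w \<in> V" "{u, w} \<in> E"
  then obtain t I where "(t, I) \<in> set Is" "{u, w} \<in> I" using swap_networkD(5)[OF net] by blast
  then obtain j where "j < length Is" "Is ! j = (t, I)" by (meson in_set_conv_nth)
  with \<open>{u, w} \<in> I\<close> have "(j, w) \<in> incidences Is u" unfolding incidences_def by simp
  then show "w \<in> snd ` incidences Is u" by force
qed

lemma degree_le_incidences_le_interaction_depth:
  assumes net: "swap_network V E \<pi>0 Ls Is"
  shows "card {w \<in> V. {u, w} \<in> E} \<le> card (snd ` incidences Is u)"
    and "card (snd ` incidences Is u) \<le> card (incidences Is u)"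
    and "card (incidences Is u) \<le> length Is"
proof -
  show "card {w \<in> V. {u, w} \<in> E} \<le> card (snd ` incidences Is u)"
    using neighbours_subset_snd_incidences[OF net] finite_incidences[OF net]
    by (intro card_mono) auto
  show "card (snd ` incidences Is u) \<le> card (incidences Is u)"
    using finite_incidences[OF net] by (rule card_image_le)
  have "card (incidences Is u) = card (fst ` incidences Is u)"
    using card_image[OF inj_on_fst_incidences[OF net]] by simp
  also have "\<dots> \<le> length Is"
    using card_mono[OF _ fst_incidences_subset] by fastforce
  finally show "card (incidences Is u) \<le> length Is" .
qed

lemma degree_le_interaction_depth:
  assumes "swap_network V E \<pi>0 Ls Is"
  shows "card {w \<in> V. {u, w} \<in> E} \<le> length Is"
  using degree_le_incidences_le_interaction_depth[OF assms] by (meson order_trans)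

lemma interaction_depth_le_degreeD:
  assumes net: "swap_network V E \<pi>0 Ls Is" and tight: "length Is \<le> card {w \<in> V. {u, w} \<in> E}"
  shows "fst ` incidences Is u = {..<length Is}" and "inj_on snd (incidences Is u)"
proof -
  note le = degree_le_incidences_le_interaction_depth[OF net, of u]
  have "card (fst ` incidences Is u) = length Is"
    using le tight card_image[OF inj_on_fst_incidences[OF net]] by simp
  then show "fst ` incidences Is u = {..<length Is}"
    using fst_incidences_subset[of Is u] by (intro card_subset_eq) auto
  have "card (snd ` incidences Is u) = card (incidences Is u)"
    using le tight by simp
  then show "inj_on snd (incidences Is u)"
    using finite_incidences[OF net] by (simp add: eq_card_imp_inj_on)
qed

lemma even_card_if_layer_covers:
  assumes layer: "interaction_layer E \<pi> I" and edges: "\<forall>e\<in>E. card e = 2 \<and> e \<subseteq> V"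
    and "finite V" and covers: "\<forall>v\<in>V. \<exists>e\<in>I. v \<in> e"
  shows "even (card V)"
proof -
  have IE: "I \<subseteq> E" using interaction_layer_subset[OF layer] .
  have "I \<subseteq> Pow V" using IE edges by blast
  have "pairwise disjnt I"
    by (rule pairwiseI) (simp add: disjnt_def interaction_layer_disjoint[OF layer])
  then have "card (\<Union>I) = sum card I"
    using \<open>I \<subseteq> Pow V\<close> \<open>finite V\<close> by (intro card_Union_disjoint) (auto intro: finite_subset)
  also have "\<dots> = 2 * card I" using IE edges by (simp add: subset_iff)
  also have "\<Union>I = V" using IE edges covers by blast
  finally show ?thesis by simp
qed

section \<open>Lower bounds for the complete graph\<close>

lemma mem_Kn_V [simp]: "v \<in> Kn_V n \<longleftrightarrow> v < n"
  unfolding Kn_V_def by simp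

lemma card_Kn_V [simp]: "card (Kn_V n) = n"
  unfolding Kn_V_def by simp

lemma insert_mem_Kn_E_iff [simp]: "{v, w} \<in> Kn_E n \<longleftrightarrow> v < n \<and> w < n \<and> v \<noteq> w"
  unfolding Kn_E_def by (auto simp: doubleton_eq_iff)

lemma Kn_E_elim:
  assumes "e \<in> Kn_E n"
  obtains v w where "e = {v, w}" "v < n" "w < n" "v \<noteq> w"
  using assms unfolding Kn_E_def by blast

lemma Kn_E_card_subset: "e \<in> Kn_E n \<Longrightarrow> card e = 2 \<and> e \<subseteq> Kn_V n"
  by (elim Kn_E_elim) simp

lemma card_Kn_neighbours: "u < n \<Longrightarrow> card {w \<in> Kn_V n. {u, w} \<in> Kn_E n} = n - 1"
proof -
  assume "u < n"
  then have "{w \<in> Kn_V n. {u, w} \<in> Kn_E n} = Kn_V n - {u}" by auto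
  then show ?thesis using \<open>u < n\<close> by simp
qed

lemma Kn_swap_depth_ge:
  assumes net: "swap_network (Kn_V n) (Kn_E n) \<pi>0 Ls Is"
  shows "n - 2 \<le> length Ls"
proof (cases "n = 0")
  case False
  obtain a where "a < n" "\<pi>0 a = 0"
    using swap_network_position_occupied[OF net, of 0 0] False by auto
  then show ?thesis using degree_le_Suc_swap_depth[OF net, of a] card_Kn_neighbours by simp
qed simp

lemma Kn_interaction_depth_ge:
  assumes net: "swap_network (Kn_V n) (Kn_E n) \<pi>0 Ls Is"
  shows "n - 1 \<le> length Is"
  using degree_le_interaction_depth[OF net, of 0] card_Kn_neighbours[of 0 n] by (cases "n = 0") auto

lemma Kn_tight_layer_covers:
  assumes net: "swap_network (Kn_V n) (Kn_E n) \<pi>0 Ls Is" and tight: "length Is \<le> n - 1"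
    and "j < length Is" "u < n"
  shows "\<exists>w. {u, w} \<in> snd (Is ! j)"
proof -
  have "j \<in> fst ` incidences Is u"
    using interaction_depth_le_degreeD(1)[OF net] tight assms(3,4) card_Kn_neighbours by simp
  then show ?thesis unfolding incidences_def by auto
qed

lemma Kn_tight_layers_disjoint:
  assumes net: "swap_network (Kn_V n) (Kn_E n) \<pi>0 Ls Is" and tight: "length Is \<le> n - 1"
    and j: "j < length Is" "j' < length Is" and e: "e \<in> snd (Is ! j)" "e \<in> snd (Is ! j')"
  shows "j = j'"
proof -
  have "e \<in> Kn_E n"
    using interaction_layer_subset[OF swap_network_nth(2)[OF net j(1)]] e(1) by blast
  then obtain u w where "e = {u, w}" "u < n" by (elim Kn_E_elim)
  then have "(j, w) \<in> incidences Is u" "(j', w) \<in> incidences Is u"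
    using j e unfolding incidences_def by auto
  moreover have "inj_on snd (incidences Is u)"
    using interaction_depth_le_degreeD(2)[OF net] tight \<open>u < n\<close> card_Kn_neighbours by simp
  ultimately show "j = j'" using inj_onD[of snd _ "(j, w)" "(j', w)"] by simp
qed

lemma Kn_odd_interaction_depth_ge:
  assumes net: "swap_network (Kn_V n) (Kn_E n) \<pi>0 Ls Is" and "2 \<le> n" "odd n"
  shows "n \<le> length Is"
proof (rule ccontr)
  assume "\<not> n \<le> length Is"
  then have tight: "length Is \<le> n - 1" by simp
  have "n \<noteq> 2" using \<open>odd n\<close> by presburger
  then have "0 < length Is" using Kn_interaction_depth_ge[OF net] \<open>2 \<le> n\<close> by linarith
  note layer = swap_network_nth(2)[OF net this]
  have covers: "\<forall>u\<in>Kn_V n. \<exists>e\<in>snd (Is ! 0). u \<in> e"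
  proof
    fix u assume "u \<in> Kn_V n"
    then obtain w where "{u, w} \<in> snd (Is ! 0)"
      using Kn_tight_layer_covers[OF net tight \<open>0 < length Is\<close>] by auto
    then show "\<exists>e\<in>snd (Is ! 0). u \<in> e" by blast
  qed
  have edges: "\<forall>e\<in>Kn_E n. card e = 2 \<and> e \<subseteq> Kn_V n"
    using Kn_E_card_subset by blast
  have "even (card (Kn_V n))"
    by (rule even_card_if_layer_covers[OF layer edges _ covers]) (simp add: Kn_V_def)
  then show False using \<open>odd n\<close> by simp
qed

lemma Kn_front_pair_in_tight_layer:
  assumes net: "swap_network (Kn_V n) (Kn_E n) \<pi>0 Ls Is" and tight: "length Is \<le> n - 1"
    and j: "j < length Is"
  shows "{v \<in> Kn_V n. config_at \<pi>0 Ls (fst (Is ! j)) v < 2} \<in> snd (Is ! j)"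
proof -
  define \<pi> where "\<pi> = config_at \<pi>0 Ls (fst (Is ! j))"
  have t: "fst (Is ! j) \<le> length Ls" and layer: "interaction_layer (Kn_E n) \<pi> (snd (Is ! j))"
    using swap_network_nth[OF net j] unfolding \<pi>_def by auto
  have inj: "inj_on \<pi> (Kn_V n)"
    using swap_network_bij_betw_config_at[OF net t] unfolding \<pi>_def bij_betw_def by simp
  have "0 < n" using j tight by linarith
  then obtain c where c: "c < n" "\<pi> c = 0"
    using swap_network_position_occupied[OF net t, of 0] unfolding \<pi>_def by auto
  obtain w where cw: "{c, w} \<in> snd (Is ! j)"
    using Kn_tight_layer_covers[OF net tight j c(1)] by blast
  have w: "\<pi> w = 1" "w < n"
    using interaction_layer_adjacent[OF layer cw] interaction_layer_subset[OF layer] cw c(2)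
    unfolding adjacent_at_def by auto
  have "\<pi> v < 2 \<longleftrightarrow> v = c \<or> v = w" if "v < n" for v
  proof
    assume "\<pi> v < 2"
    then have "\<pi> v = \<pi> c \<or> \<pi> v = \<pi> w" using c(2) w(1) by linarith
    then show "v = c \<or> v = w" using inj that c(1) w(2) by (metis inj_onD mem_Kn_V)
  qed (use c(2) w(1) in auto)
  then have "{v \<in> Kn_V n. \<pi> v < 2} = {c, w}" using c(1) w(2) by auto
  then show ?thesis using cw unfolding \<pi>_def by simp
qed

lemma Kn_even_no_tight_network:
  assumes net: "swap_network (Kn_V n) (Kn_E n) \<pi>0 Ls Is" and "4 \<le> n"
    and swaps: "length Ls = n - 2" and layers: "length Is = n - 1"
  shows False
proof -
  define front where "front t = {v \<in> Kn_V n. config_at \<pi>0 Ls t v < 2}" for t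
  define time where "time j = fst (Is ! j)" for j
  have front_in_layer: "front (time j) \<in> snd (Is ! j)" if "j < n - 1" for j
    using Kn_front_pair_in_tight_layer[OF net] that layers unfolding front_def time_def by simp
  have same_layer: "j = j'" if "j < n - 1" "j' < n - 1" "front (time j) = front (time j')" for j j'
    using Kn_tight_layers_disjoint[OF net _ _ _ front_in_layer[OF that(1)]]
      front_in_layer[OF that(2)] that layers by simp
  have "inj_on time {..<n - 1}"
    using same_layer by (intro inj_onI) auto
  moreover have "time ` {..<n - 1} \<subseteq> {..n - 2}"
    using swap_network_nth(1)[OF net] layers swaps unfolding time_def by auto
  ultimately have onto: "time ` {..<n - 1} = {..n - 2}"
    using \<open>4 \<le> n\<close> by (intro card_subset_eq) (auto simp: card_image)
  have "\<exists>j < n - 1. time j = t" if "t \<le> 2" for t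
  proof -
    have "t \<in> time ` {..<n - 1}" using onto that \<open>4 \<le> n\<close> by simp
    then show ?thesis by auto
  qed
  then obtain j0 j1 j2 where j: "j0 < n - 1" "j1 < n - 1" "j2 < n - 1"
    and times: "time j0 = 0" "time j1 = 1" "time j2 = 2"
    by (meson le_refl one_le_numeral zero_le)
  have "2 \<le> length Ls" using swaps \<open>4 \<le> n\<close> by simp
  then have "front 0 = front 1 \<or> front 1 = front 2 \<or> front 0 = front 2"
    unfolding front_def by (rule front_pair_repeats[OF swap_networkD(2)[OF net]])
  moreover have "j0 \<noteq> j1" "j1 \<noteq> j2" "j0 \<noteq> j2" using times by auto
  ultimately show False
    using same_layer[OF j(1,2)] same_layer[OF j(2,3)] same_layer[OF j(1,3)]
    unfolding times by blast
qed

section \<open>Odd-even transposition\<close>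

definition oe_step :: "nat \<Rightarrow> nat \<Rightarrow> nat \<Rightarrow> nat" where
  "oe_step N k r =
    (if even (r + k) then (if Suc r < N then Suc r else r) else (if 0 < r then r - 1 else r))"

definition zigzag :: "nat \<Rightarrow> nat \<Rightarrow> nat" where
  "zigzag N x = (if x mod (2 * N) < N then x mod (2 * N) else 2 * N - 1 - x mod (2 * N))"

lemma zigzag_less: "0 < N \<Longrightarrow> zigzag N x < N"
  using mod_less_divisor[of "2 * N" x] unfolding zigzag_def by auto

lemma zigzag_low: "x < N \<Longrightarrow> zigzag N x = x"
  unfolding zigzag_def by simp

lemma zigzag_high: "N \<le> x \<Longrightarrow> x < 2 * N \<Longrightarrow> zigzag N x = 2 * N - 1 - x"
  unfolding zigzag_def by simp

lemma zigzag_add_double [simp]: "zigzag N (x + 2 * N) = zigzag N x"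
  unfolding zigzag_def by simp

lemma zigzag_add: "0 < N \<Longrightarrow> zigzag N (x + N) = N - 1 - zigzag N x"
proof -
  assume "0 < N"
  define y where "y = x mod (2 * N)"
  have y: "y < 2 * N" using \<open>0 < N\<close> unfolding y_def by simp
  have "(x + N) mod (2 * N) = (y + N) mod (2 * N)"
    unfolding y_def by (simp add: mod_add_left_eq)
  also have "\<dots> = (if y < N then y + N else y - N)"
  proof (cases "y < N")
    case False
    then obtain z where z: "y = N + z" using le_Suc_ex not_less by blast
    then have "y + N = z + 2 * N" by simp
    then have "(y + N) mod (2 * N) = (z + 2 * N) mod (2 * N)" by (rule arg_cong)
    also have "\<dots> = z" using z y by simp
    finally show ?thesis using False z by simp
  qed simp
  finally show ?thesis using y unfolding zigzag_def y_def[symmetric] by auto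
qed

lemma zigzag_Suc:
  assumes "0 < N" "even (x + k)"
  shows "zigzag N (Suc x) = oe_step N k (zigzag N x)"
proof -
  define y where "y = x mod (2 * N)"
  have y: "y < 2 * N" using assms(1) unfolding y_def by simp
  have "even y \<longleftrightarrow> even x"
    unfolding y_def by (rule dvd_mod_iff) simp
  then have even: "even (y + k)" using assms(2) by simp
  have "Suc x mod (2 * N) = Suc y mod (2 * N)" unfolding y_def by (simp add: mod_Suc_eq)
  then have "Suc x mod (2 * N) = (if Suc y = 2 * N then 0 else Suc y)" using y by auto
  then have zigzag_Suc_x:
    "zigzag N (Suc x) = (if Suc y = 2 * N then 0 else if Suc y < N then Suc y else 2 * N - 2 - y)"
    using assms(1) unfolding zigzag_def by auto
  have zigzag_x: "zigzag N x = (if y < N then y else 2 * N - 1 - y)"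
    unfolding zigzag_def y_def ..
  consider "Suc y < N" | "Suc y = N" | "N \<le> y" "Suc y < 2 * N" | "Suc y = 2 * N"
    using y by linarith
  then show ?thesis
  proof cases
    case 3
    have "odd (2 * N - 1 - y + k)" using 3 even by presburger
    then show ?thesis using 3 unfolding zigzag_Suc_x zigzag_x oe_step_def by simp
  next
    case 4
    have "odd (0 + k)" using 4 even by presburger
    then show ?thesis using 4 unfolding zigzag_Suc_x zigzag_x oe_step_def by simp
  qed (use assms(1) even in \<open>simp_all add: zigzag_Suc_x zigzag_x oe_step_def\<close>)
qed

(* Unfolding the reflections at both ends turns its trajectory into the
   line c + t, where c = p for even p and c = 2 N - 1 - p, the mirror image of p, for odd p;
   both choices of c are even. *)
definition oe_pos :: "nat \<Rightarrow> nat \<Rightarrow> nat \<Rightarrow> nat" where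
  "oe_pos N p t = zigzag N ((if even p then p else 2 * N - 1 - p) + t)"

lemma oe_pos_0: "p < N \<Longrightarrow> oe_pos N p 0 = p"
  unfolding oe_pos_def by (cases "even p") (auto simp: zigzag_low zigzag_high elim: oddE)

lemma oe_pos_less: "0 < N \<Longrightarrow> oe_pos N p t < N"
  unfolding oe_pos_def by (rule zigzag_less)

lemma oe_pos_Suc:
  assumes "p < N"
  shows "oe_pos N p (Suc t) = oe_step N t (oe_pos N p t)"
proof -
  have "even ((if even p then p else 2 * N - 1 - p) + t + t)"
    using assms by (cases "even p") (auto elim: oddE)
  then show ?thesis using zigzag_Suc assms unfolding oe_pos_def by simp
qed

lemma oe_pos_add:
  assumes "0 < N"
  shows "oe_pos N p (t + N) = N - 1 - oe_pos N p t"
  unfolding oe_pos_def add.assoc[symmetric] by (rule zigzag_add[OF assms])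

lemma oe_pos_swap:
  assumes "p < N" "p' < N" and meet: "even (oe_pos N p T + T)" "oe_pos N p' T = Suc (oe_pos N p T)"
  shows "oe_pos N p (Suc T) = oe_pos N p' T" and "oe_pos N p' (Suc T) = oe_pos N p T"
proof -
  have "Suc (oe_pos N p T) < N" using oe_pos_less[of N p' T] meet(2) assms(2) by simp
  then show "oe_pos N p (Suc T) = oe_pos N p' T" "oe_pos N p' (Suc T) = oe_pos N p T"
    using oe_pos_Suc assms meet unfolding oe_step_def by simp_all
qed

lemma oe_pos_meet_from_even:
  assumes "even p" "p < p'" "p' < N"
  shows "\<exists>T \<le> N - 2. even (oe_pos N p T + T) \<and> oe_pos N p' T = Suc (oe_pos N p T)"
proof (cases "even p'")
  case True
  define T where "T = N - 1 - (p + p') div 2"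
  have "oe_pos N p T = p + T"
    using assms True unfolding oe_pos_def T_def by (auto simp: zigzag_low elim!: evenE)
  moreover have "oe_pos N p' T = 2 * N - 1 - (p' + T)"
    using assms True unfolding oe_pos_def T_def by (auto simp: zigzag_high elim!: evenE)
  ultimately show ?thesis using assms True
    by (intro exI[of _ T]) (auto simp: T_def elim!: evenE)
next
  case False
  obtain a b where ab: "p = 2 * a" "p' = 2 * b + 1" using assms(1) False by (auto elim!: evenE oddE)
  define T where "T = b - a"
  have "oe_pos N p T = a + b"
    using assms ab unfolding oe_pos_def T_def by (auto simp: zigzag_low)
  moreover have "oe_pos N p' T = Suc (a + b)"
    using assms ab unfolding oe_pos_def T_def by (auto simp: zigzag_high)
  ultimately show ?thesis using assms ab
    by (intro exI[of _ T]) (auto simp: T_def)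
qed

lemma oe_pos_meet_from_odd:
  assumes "odd p" "p < p'" "p' < N" "p' \<noteq> Suc p"
  shows "\<exists>T \<le> N - 2. even (oe_pos N p T + T) \<and> oe_pos N p' T = Suc (oe_pos N p T)"
proof (cases "even p'")
  case True
  obtain a b where ab: "p = 2 * a + 1" "p' = 2 * b" using assms(1) True by (auto elim!: evenE oddE)
  have "a + 2 \<le> b" using assms(2,4) ab by simp
  define T where "T = N - (b - a)"
  have "(if even p then p else 2 * N - 1 - p) + T = (N - 2 - a - b) + 2 * N"
    using assms(3) ab \<open>a + 2 \<le> b\<close> unfolding T_def by simp
  then have "oe_pos N p T = N - 2 - a - b"
    using assms(3) unfolding oe_pos_def by (simp add: zigzag_low)
  moreover have "oe_pos N p' T = N - 1 - a - b"
    using assms ab \<open>a + 2 \<le> b\<close> unfolding oe_pos_def T_def by (simp add: zigzag_high)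
  ultimately show ?thesis using assms ab \<open>a + 2 \<le> b\<close>
    by (intro exI[of _ T]) (auto simp: T_def)
next
  case False
  obtain a b where ab: "p = 2 * a + 1" "p' = 2 * b + 1" using assms(1) False by (auto elim!: oddE)
  have "a < b" using assms(2) ab by simp
  define T where "T = a + b + 1"
  have "(if even p then p else 2 * N - 1 - p) + T = (b - a - 1) + 2 * N"
    using assms(3) ab \<open>a < b\<close> unfolding T_def by simp
  then have "oe_pos N p T = b - a - 1"
    using assms(3) ab unfolding oe_pos_def by (simp add: zigzag_low)
  moreover have "oe_pos N p' T = b - a"
    using assms ab \<open>a < b\<close> unfolding oe_pos_def T_def by (simp add: zigzag_high)
  ultimately show ?thesis using assms ab \<open>a < b\<close>
    by (intro exI[of _ T]) (auto simp: T_def)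
qed

lemma oe_pos_meet:
  assumes "p < p'" "p' < N" "\<not> (odd p \<and> p' = Suc p)"
  shows "\<exists>T \<le> N - 2. even (oe_pos N p T + T) \<and> oe_pos N p' T = Suc (oe_pos N p T)"
proof (cases "even p")
  case True
  then show ?thesis using oe_pos_meet_from_even assms(1,2) by blast
next
  case False
  then show ?thesis using oe_pos_meet_from_odd assms by blast
qed

lemma oe_pos_reaches_0:
  assumes "p < N"
  shows "\<exists>s < N. oe_pos N p (2 * s) = 0"
proof -
  define c where "c = (if even p then p else 2 * N - 1 - p)"
  have c: "even c" "c < 2 * N" using assms unfolding c_def by (auto elim: oddE)
  show ?thesis
  proof (cases "c = 0")
    case True
    then show ?thesis using assms unfolding oe_pos_def c_def[symmetric]
      by (intro exI[of _ 0]) (simp add: zigzag_low)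
  next
    case False
    then have "c + 2 * (N - c div 2) = 2 * N" using c by (auto elim: evenE)
    then have "oe_pos N p (2 * (N - c div 2)) = zigzag N (2 * N)"
      unfolding oe_pos_def c_def[symmetric] by simp
    also have "\<dots> = 0" using assms by (simp add: zigzag_def)
    finally show ?thesis using False c by (intro exI[of _ "N - c div 2"]) auto
  qed
qed

(* A pair meeting at time T is reflected to a pair meeting at time T + N (oe_pos_add); since N
   is odd, one of T + 1 and T + N + 1 is even, and at that time the lower element is at an odd
   position. *)
lemma oe_pos_adjacent_at_even_time:
  assumes "odd N" "p < p'" "p' < N"
  shows "\<exists>s < N. (oe_pos N p' (2 * s) = Suc (oe_pos N p (2 * s)) \<and> odd (oe_pos N p (2 * s)))
              \<or> (oe_pos N p (2 * s) = Suc (oe_pos N p' (2 * s)) \<and> odd (oe_pos N p' (2 * s)))"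
proof (cases "odd p \<and> p' = Suc p")
  case True
  then show ?thesis using assms by (intro exI[of _ 0]) (simp add: oe_pos_0)
next
  case False
  then obtain T where T: "T \<le> N - 2" "even (oe_pos N p T + T)" "oe_pos N p' T = Suc (oe_pos N p T)"
    using oe_pos_meet[OF assms(2,3)] by blast
  define i where "i = oe_pos N p T"
  have "Suc i < N" using oe_pos_less[of N p' T] T(3) assms unfolding i_def by simp
  show ?thesis
  proof (cases "even T")
    case True
    have at_reflection: "oe_pos N p (T + N) = Suc (N - 2 - i)" "oe_pos N p' (T + N) = N - 2 - i"
      using oe_pos_add[of N p T] oe_pos_add[of N p' T] T(3) \<open>Suc i < N\<close> unfolding i_def by simp_all
    have "even i" using T(2) True unfolding i_def by simp
    then have "odd (N - 2 - i)" using \<open>odd N\<close> \<open>Suc i < N\<close> by presburger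
    moreover from this have "even (N - 2 - i + (T + N))" using True \<open>odd N\<close> by simp
    ultimately have "oe_pos N p' (Suc (T + N)) = Suc (N - 2 - i)"
      and "oe_pos N p (Suc (T + N)) = N - 2 - i"
      using oe_pos_swap[of p' N p "T + N"] at_reflection assms by simp_all
    moreover obtain a where a: "T = 2 * a" using True by (rule evenE)
    moreover obtain b where b: "N = 2 * b + 1" using \<open>odd N\<close> by (rule oddE)
    moreover have "a + b + 1 < N" using T(1) a b assms(2,3) by linarith
    ultimately show ?thesis using \<open>odd (N - 2 - i)\<close> by (intro exI[of _ "a + b + 1"]) simp
  next
    case False
    have "oe_pos N p (Suc T) = Suc i" "oe_pos N p' (Suc T) = i"
      using oe_pos_swap[of p N p' T] T assms unfolding i_def by simp_all
    moreover have "odd i" using T(2) False unfolding i_def by simp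
    moreover obtain a where a: "T = 2 * a + 1" using False by (rule oddE)
    moreover have "a + 1 < N" using T(1) a by linarith
    ultimately show ?thesis by (intro exI[of _ "a + 1"]) simp
  qed
qed

definition oe_layer :: "nat \<Rightarrow> nat \<Rightarrow> nat \<Rightarrow> nat set set" where
  "oe_layer N off k = {{off + i, Suc (off + i)} | i. Suc i < N \<and> even (i + k)}"

lemma insert_Suc_mem_oe_layer_iff:
  "{p, Suc p} \<in> oe_layer N off k \<longleftrightarrow> off \<le> p \<and> Suc (p - off) < N \<and> even (p - off + k)"
proof
  assume "{p, Suc p} \<in> oe_layer N off k"
  then obtain i where "p = off + i" "Suc i < N" "even (i + k)"
    unfolding oe_layer_def by auto
  then show "off \<le> p \<and> Suc (p - off) < N \<and> even (p - off + k)" by simp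
next
  assume "off \<le> p \<and> Suc (p - off) < N \<and> even (p - off + k)"
  then show "{p, Suc p} \<in> oe_layer N off k"
    unfolding oe_layer_def by (intro CollectI exI[of _ "p - off"]) auto
qed

lemma swap_layer_oe_layer:
  assumes "off + N \<le> n"
  shows "swap_layer n (oe_layer N off k)"
  unfolding swap_layer_def
proof (intro conjI ballI impI)
  fix P assume "P \<in> oe_layer N off k"
  then obtain i where "P = {off + i, Suc (off + i)}" "Suc i < N" unfolding oe_layer_def by blast
  then show "\<exists>i. P = {i, Suc i} \<and> Suc i < n" using assms by (intro exI[of _ "off + i"]) simp
next
  fix P Q assume "P \<in> oe_layer N off k" "Q \<in> oe_layer N off k" "P \<noteq> Q"
  then obtain i i' where "P = {off + i, Suc (off + i)}" "Q = {off + i', Suc (off + i')}"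
    "even (i + k)" "even (i' + k)" "i \<noteq> i'"
    unfolding oe_layer_def by blast
  moreover have "i' \<noteq> Suc i" "i \<noteq> Suc i'" using \<open>even (i + k)\<close> \<open>even (i' + k)\<close> by presburger+
  ultimately show "P \<inter> Q = {}" by auto
qed

lemma swap_pos_oe_layer:
  assumes "off \<le> q" "q < off + N"
  shows "swap_pos (oe_layer N off k) q = off + oe_step N k (q - off)"
proof -
  obtain r where r: "q = off + r" "r < N" using assms le_Suc_ex by force
  have "0 < q \<and> {q - 1, q} \<in> oe_layer N off k \<longleftrightarrow> 0 < r \<and> odd (r + k)"
  proof (cases r)
    case 0
    have "{q - 1, Suc (q - 1)} \<notin> oe_layer N off k" if "0 < q"
      using 0 r that insert_Suc_mem_oe_layer_iff[of "q - 1" N off k] by auto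
    then show ?thesis using 0 by (cases q) auto
  next
    case (Suc r')
    then have "{q - 1, q} = {off + r', Suc (off + r')}" using r by simp
    then show ?thesis using Suc r by (simp add: insert_Suc_mem_oe_layer_iff)
  qed
  then show ?thesis
    using r unfolding swap_pos_def oe_step_def by (auto simp: insert_Suc_mem_oe_layer_iff)
qed

lemma swap_pos_oe_layer_below:
  assumes "q < off"
  shows "swap_pos (oe_layer N off k) q = q"
proof -
  have "{q - 1, q} \<notin> oe_layer N off k" if "0 < q"
    using that assms insert_Suc_mem_oe_layer_iff[of "q - 1" N off k] by auto
  then show ?thesis using assms unfolding swap_pos_def by (auto simp: insert_Suc_mem_oe_layer_iff)
qed

lemma config_at_oe_layers:
  assumes p: "p < N" and v: "\<pi>0 v = off + p" and t: "t \<le> D"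
  shows "config_at \<pi>0 (map (oe_layer N off) [0..<D]) t v = off + oe_pos N p t"
  using t
proof (induction t)
  case 0
  then show ?case using p v by (simp add: oe_pos_0)
next
  case (Suc t)
  then have t: "t < length (map (oe_layer N off) [0..<D])" by simp
  then have "config_at \<pi>0 (map (oe_layer N off) [0..<D]) (Suc t) v
      = swap_pos (oe_layer N off t) (off + oe_pos N p t)"
    using Suc by (simp add: config_at_Suc)
  also have "\<dots> = off + oe_step N t (oe_pos N p t)"
    using oe_pos_less[of N p t] p by (simp add: swap_pos_oe_layer)
  also have "\<dots> = off + oe_pos N p (Suc t)"
    using oe_pos_Suc[OF p] by simp
  finally show ?case .
qed

lemma config_at_oe_layers_below:
  assumes "\<pi>0 v < off" "t \<le> D"
  shows "config_at \<pi>0 (map (oe_layer N off) [0..<D]) t v = \<pi>0 v"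
  using assms(2)
proof (induction t)
  case (Suc t)
  then show ?case using assms(1) by (simp add: config_at_Suc swap_pos_oe_layer_below)
qed simp

section \<open>Optimal swap networks for the complete graph\<close>

definition pair_layer :: "(nat \<Rightarrow> nat) \<Rightarrow> nat \<Rightarrow> (nat \<Rightarrow> bool) \<Rightarrow> nat set set" where
  "pair_layer \<pi> n S = {{v, w} | v w. v < n \<and> w < n \<and> S (\<pi> v) \<and> \<pi> w = Suc (\<pi> v)}"

lemma pair_layerI:
  "v < n \<Longrightarrow> w < n \<Longrightarrow> S (\<pi> v) \<Longrightarrow> \<pi> w = Suc (\<pi> v) \<Longrightarrow> {v, w} \<in> pair_layer \<pi> n S"
  unfolding pair_layer_def by blast

lemma interaction_layer_pair_layer:
  assumes inj: "inj_on \<pi> {0..<n}" and S: "\<And>i. S i \<Longrightarrow> \<not> S (Suc i)"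
  shows "interaction_layer (Kn_E n) \<pi> (pair_layer \<pi> n S)"
  unfolding interaction_layer_def
proof (intro conjI ballI impI)
  show "pair_layer \<pi> n S \<subseteq> Kn_E n"
    unfolding pair_layer_def by auto
next
  fix e e' assume "e \<in> pair_layer \<pi> n S" "e' \<in> pair_layer \<pi> n S" "e \<noteq> e'"
  then obtain v w v' w' where e: "e = {v, w}" "v < n" "w < n" "S (\<pi> v)" "\<pi> w = Suc (\<pi> v)"
    and e': "e' = {v', w'}" "v' < n" "w' < n" "S (\<pi> v')" "\<pi> w' = Suc (\<pi> v')"
    and "e \<noteq> e'"
    unfolding pair_layer_def by blast
  have eq: "x = y" if "x < n" "y < n" "\<pi> x = \<pi> y" for x y
    using inj that by (auto dest: inj_onD)
  have "v \<noteq> v'" "w \<noteq> w'" using eq e e' \<open>e \<noteq> e'\<close> by auto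
  moreover have "v \<noteq> w'" "w \<noteq> v'" using e e' S by auto
  ultimately show "e \<inter> e' = {}" using e e' by auto
next
  fix e assume "e \<in> pair_layer \<pi> n S"
  then show "\<exists>v w. e = {v, w} \<and> (\<pi> v = Suc (\<pi> w) \<or> \<pi> w = Suc (\<pi> v))"
    unfolding pair_layer_def by blast
qed

definition pair_layers ::
  "nat set set list \<Rightarrow> nat \<Rightarrow> (nat \<times> (nat \<Rightarrow> bool)) list \<Rightarrow> (nat \<times> nat set set) list" where
  "pair_layers Ls n ts = map (\<lambda>(t, S). (t, pair_layer (config_at id Ls t) n S)) ts"

lemma swap_network_pair_layers:
  assumes layers: "\<forall>L\<in>set Ls. swap_layer n L"
    and schedule: "\<forall>(t, S)\<in>set ts. t \<le> length Ls \<and> (\<forall>i. S i \<longrightarrow> \<not> S (Suc i))"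
    and covers: "\<And>v w. v < w \<Longrightarrow> w < n \<Longrightarrow>
      \<exists>t S. (t, S) \<in> set ts \<and> {v, w} \<in> pair_layer (config_at id Ls t) n S"
  shows "swap_network (Kn_V n) (Kn_E n) id Ls (pair_layers Ls n ts)"
  unfolding swap_network_def
proof (intro conjI)
  show conf: "configuration (Kn_V n) id" unfolding configuration_def Kn_V_def by simp
  show layers': "\<forall>L\<in>set Ls. swap_layer (card (Kn_V n)) L" using layers by simp
  show "\<forall>(t, I)\<in>set (pair_layers Ls n ts).
      t \<le> length Ls \<and> interaction_layer (Kn_E n) (config_at id Ls t) I"
  proof
    fix x assume "x \<in> set (pair_layers Ls n ts)"
    then obtain t S where x: "x = (t, pair_layer (config_at id Ls t) n S)" and "(t, S) \<in> set ts"
      unfolding pair_layers_def by auto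
    with schedule have t: "t \<le> length Ls" and S: "\<And>i. S i \<Longrightarrow> \<not> S (Suc i)" by auto
    have "inj_on (config_at id Ls t) {0..<n}"
      using bij_betw_config_at[OF conf layers' t] unfolding bij_betw_def Kn_V_def by simp
    then show "case x of (t, I) \<Rightarrow> t \<le> length Ls \<and> interaction_layer (Kn_E n) (config_at id Ls t) I"
      using x t interaction_layer_pair_layer S by simp
  qed
  show "\<forall>e\<in>Kn_E n. \<exists>(t, I)\<in>set (pair_layers Ls n ts). e \<in> I"
  proof
    fix e assume "e \<in> Kn_E n"
    then obtain v w where e: "e = {v, w}" "v < n" "w < n" "v < w \<or> w < v"
      by (elim Kn_E_elim) (metis linorder_neqE_nat)
    then obtain t S where "(t, S) \<in> set ts" "e \<in> pair_layer (config_at id Ls t) n S"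
      using covers[of v w] covers[of w v] by (auto simp: insert_commute)
    then show "\<exists>(t, I)\<in>set (pair_layers Ls n ts). e \<in> I"
      unfolding pair_layers_def by force
  qed
qed

definition oe_swaps :: "nat \<Rightarrow> nat set set list" where
  "oe_swaps n = map (oe_layer n 0) [0..<n - 2]"

(* The pairs (p, p + 1) with p odd move apart at once and are adjacent again only after n - 2
   rounds, so they interact in the initial configuration. *)
definition oe_schedule :: "nat \<Rightarrow> (nat \<times> (nat \<Rightarrow> bool)) list" where
  "oe_schedule n = (0, odd) # map (\<lambda>t. (t, \<lambda>i. even (i + t))) [0..<n - 1]"

lemma Kn_oe_network:
  assumes "2 \<le> n"
  shows "swap_network (Kn_V n) (Kn_E n) id (oe_swaps n)
    (pair_layers (oe_swaps n) n (oe_schedule n))"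
proof (rule swap_network_pair_layers)
  show "\<forall>L\<in>set (oe_swaps n). swap_layer n L"
    unfolding oe_swaps_def using swap_layer_oe_layer[of 0 n n] by auto
  show "\<forall>(t, S)\<in>set (oe_schedule n). t \<le> length (oe_swaps n) \<and> (\<forall>i. S i \<longrightarrow> \<not> S (Suc i))"
    unfolding oe_schedule_def oe_swaps_def by auto
  fix v w assume vw: "v < w" "w < n"
  have config: "config_at id (oe_swaps n) t u = oe_pos n u t" if "u < n" "t \<le> n - 2" for u t
    using config_at_oe_layers[of u n id u 0 t "n - 2"] that unfolding oe_swaps_def by simp
  show "\<exists>t S. (t, S) \<in> set (oe_schedule n) \<and> {v, w} \<in> pair_layer (config_at id (oe_swaps n) t) n S"
  proof (cases "odd v \<and> w = Suc v")
    case True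
    then have "{v, w} \<in> pair_layer (config_at id (oe_swaps n) 0) n odd"
      using vw by (intro pair_layerI) auto
    moreover have "(0, odd) \<in> set (oe_schedule n)" unfolding oe_schedule_def by simp
    ultimately show ?thesis by blast
  next
    case False
    then obtain T where T: "T \<le> n - 2" "even (oe_pos n v T + T)" "oe_pos n w T = Suc (oe_pos n v T)"
      using oe_pos_meet[OF vw] by blast
    then have "{v, w} \<in> pair_layer (config_at id (oe_swaps n) T) n (\<lambda>i. even (i + T))"
      using config vw by (intro pair_layerI) auto
    moreover have "(T, \<lambda>i. even (i + T)) \<in> set (oe_schedule n)"
      using T(1) assms unfolding oe_schedule_def by auto
    ultimately show ?thesis by blast
  qed
qed

lemma length_oe_swaps: "length (oe_swaps n) = n - 2"
  unfolding oe_swaps_def by simp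

lemma length_pair_layers_oe_schedule: "2 \<le> n \<Longrightarrow> length (pair_layers Ls n (oe_schedule n)) = n"
  unfolding pair_layers_def oe_schedule_def by simp

definition pinned_swaps :: "nat \<Rightarrow> nat set set list" where
  "pinned_swaps n = map (oe_layer (n - 1) 1) [0..<2 * (n - 2)]"

definition pinned_schedule :: "nat \<Rightarrow> (nat \<times> (nat \<Rightarrow> bool)) list" where
  "pinned_schedule n = map (\<lambda>s. (2 * s, even)) [0..<n - 1]"

lemma config_at_pinned_swaps:
  assumes "0 < u" "u < n" "t \<le> 2 * (n - 2)"
  shows "config_at id (pinned_swaps n) t u = Suc (oe_pos (n - 1) (u - 1) t)"
  using config_at_oe_layers[of "u - 1" "n - 1" id u 1 t "2 * (n - 2)"] assms
  unfolding pinned_swaps_def by simp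

lemma config_at_pinned_swaps_0: "t \<le> 2 * (n - 2) \<Longrightarrow> config_at id (pinned_swaps n) t 0 = 0"
  using config_at_oe_layers_below[of id 0 1 t "2 * (n - 2)" "n - 1"]
  unfolding pinned_swaps_def by simp

lemma pinned_swaps_cover:
  assumes "even n" "v < w" "w < n"
  shows "\<exists>s < n - 1. {v, w} \<in> pair_layer (config_at id (pinned_swaps n) (2 * s)) n even"
proof -
  define N where "N = n - 1"
  have "odd N" using assms unfolding N_def by (cases n) auto
  have config: "config_at id (pinned_swaps n) (2 * s) u = Suc (oe_pos N (u - 1) (2 * s))"
    if "0 < u" "u < n" "s < N" for u s
    using config_at_pinned_swaps that unfolding N_def by simp
  show ?thesis
  proof (cases "v = 0")
    case True
    have "w - 1 < N" using assms unfolding N_def by linarith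
    then obtain s where "s < N" "oe_pos N (w - 1) (2 * s) = 0"
      using oe_pos_reaches_0 by blast
    then show ?thesis
      using True assms config config_at_pinned_swaps_0[of "2 * s" n] unfolding N_def
      by (intro exI[of _ s] conjI pair_layerI) auto
  next
    case False
    have "v - 1 < w - 1" "w - 1 < N" using assms False unfolding N_def by linarith+
    then obtain s where "s < N"
      and "(oe_pos N (w - 1) (2 * s) = Suc (oe_pos N (v - 1) (2 * s))
              \<and> odd (oe_pos N (v - 1) (2 * s)))
         \<or> (oe_pos N (v - 1) (2 * s) = Suc (oe_pos N (w - 1) (2 * s))
              \<and> odd (oe_pos N (w - 1) (2 * s)))"
      using oe_pos_adjacent_at_even_time[OF \<open>odd N\<close>] by blast
    then have "{v, w} \<in> pair_layer (config_at id (pinned_swaps n) (2 * s)) n even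
      \<or> {w, v} \<in> pair_layer (config_at id (pinned_swaps n) (2 * s)) n even"
      using False assms config[of v s] config[of w s] by (auto intro: pair_layerI)
    then show ?thesis using \<open>s < N\<close> unfolding N_def by (auto simp: insert_commute)
  qed
qed

lemma Kn_pinned_network:
  assumes "4 \<le> n" "even n"
  shows "swap_network (Kn_V n) (Kn_E n) id (pinned_swaps n)
    (pair_layers (pinned_swaps n) n (pinned_schedule n))"
proof (rule swap_network_pair_layers)
  show "\<forall>L\<in>set (pinned_swaps n). swap_layer n L"
    unfolding pinned_swaps_def using swap_layer_oe_layer[of 1 "n - 1" n] assms(1) by auto
  show "\<forall>(t, S)\<in>set (pinned_schedule n).
      t \<le> length (pinned_swaps n) \<and> (\<forall>i. S i \<longrightarrow> \<not> S (Suc i))"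
    unfolding pinned_schedule_def pinned_swaps_def by auto
  fix v w assume "v < w" "w < n"
  then obtain s where "s < n - 1"
    and "{v, w} \<in> pair_layer (config_at id (pinned_swaps n) (2 * s)) n even"
    using pinned_swaps_cover[OF assms(2)] by blast
  moreover have "(2 * s, even) \<in> set (pinned_schedule n)"
    using \<open>s < n - 1\<close> unfolding pinned_schedule_def by auto
  ultimately show "\<exists>t S. (t, S) \<in> set (pinned_schedule n)
      \<and> {v, w} \<in> pair_layer (config_at id (pinned_swaps n) t) n S"
    by (intro exI[of _ "2 * s"] exI[of _ even]) simp
qed

lemma length_pair_layers_pinned_schedule: "length (pair_layers Ls n (pinned_schedule n)) = n - 1"
  unfolding pair_layers_def pinned_schedule_def by simp

theorem lemma1:
  fixes n :: nat
  assumes "n \<ge> 2"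
  shows "d_swap (Kn_V n) (Kn_E n) = n - 2
       \<and> (\<exists>\<pi>0 Ls Is. swap_network (Kn_V n) (Kn_E n) \<pi>0 Ls Is
                      \<and> length Ls = n - 2 \<and> length Is = n)
       \<and> (odd n \<longrightarrow> (\<forall>\<pi>0 Ls Is. swap_network (Kn_V n) (Kn_E n) \<pi>0 Ls Is
                      \<longrightarrow> length Is \<ge> n))
       \<and> (even n \<and> n > 2 \<longrightarrow>
            d_int (Kn_V n) (Kn_E n) = n - 1
          \<and> \<not> (\<exists>\<pi>0 Ls Is. swap_network (Kn_V n) (Kn_E n) \<pi>0 Ls Is
                      \<and> length Ls = n - 2 \<and> length Is = n - 1))"
proof (intro conjI impI allI)
  note oe_network = Kn_oe_network[OF assms] length_oe_swaps length_pair_layers_oe_schedule[OF assms]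
  show "d_swap (Kn_V n) (Kn_E n) = n - 2"
    unfolding d_swap_def using oe_network Kn_swap_depth_ge by (intro Least_equality) blast+
  show "\<exists>\<pi>0 Ls Is. swap_network (Kn_V n) (Kn_E n) \<pi>0 Ls Is \<and> length Ls = n - 2 \<and> length Is = n"
    using oe_network by blast
  show "n \<le> length Is" if "odd n" "swap_network (Kn_V n) (Kn_E n) \<pi>0 Ls Is" for \<pi>0 Ls Is
    using Kn_odd_interaction_depth_ge[OF that(2) assms that(1)] .
  assume "even n \<and> n > 2"
  then have "4 \<le> n" by presburger
  show "d_int (Kn_V n) (Kn_E n) = n - 1"
    unfolding d_int_def
    using Kn_pinned_network[OF \<open>4 \<le> n\<close>] \<open>even n \<and> n > 2\<close> length_pair_layers_pinned_schedule
      Kn_interaction_depth_ge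
    by (intro Least_equality) blast+
  show "\<not> (\<exists>\<pi>0 Ls Is. swap_network (Kn_V n) (Kn_E n) \<pi>0 Ls Is
              \<and> length Ls = n - 2 \<and> length Is = n - 1)"
    using Kn_even_no_tight_network \<open>4 \<le> n\<close> by blast
qed

end
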